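(* Let $\eta>0$ be fixed. For all $A\ge2$, $$ \sum_{n\ge 1}A^n\rho(n)\ll \exp\left(\frac{(1+\eta)A}{\log A}\right), $$ where the implied constant depends only on $\eta$.
   Context: $\rho$ denotes the Dickman--de Bruijn function: the continuous function on $[0,\infty)$ with $\rho(t)=1$ for $0\le t\le 1$ and $t\rho'(t)=-\rho(t-1)$ for $t>1$. The sum is over positive integers $n$. *)

theory Defs
  imports "HOL-Analysis.Analysis"
begin

definition dickman :: "(real \<Rightarrow> real) \<Rightarrow> bool" where
  "dickman f \<longleftrightarrow>
     continuous_on {0..} f \<and>
     (\<forall>t\<in>{0..1}. f t = 1) \<and>
     (\<forall>t>1. \<exists>D. (f has_real_derivative D) (at t) \<and> t * D = - f (t - 1))"

end

theory Submission
  imports Defs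
begin

(*
  Let M x be the supremum of |rho u| * exp (x * u) over u >= 0. Because
  u * rho u is the integral of rho over [u - 1, u], a point t >= 1 at which
  |rho| * exp (x * _) is maximal on [t - 1, t] satisfies t <= (exp x - 1) / x
  unless rho t = 0. Hence the supremum is attained on [0, (exp x - 1) / x],
  which gives M x <= M (x - h) * exp (h * (exp x - 1) / x). Stepping x up by h
  shows that ln (M x) exceeds (1 + eps) * exp x / x by at most a constant.
  Finally the sum of A^n * rho n is at most M x times the geometric series
  in A * exp (- x), and x = ln A + h yields the bound exp ((1 + eta) * A / ln A).
*)

lemma dickman_continuous_on: "dickman \<rho> \<Longrightarrow> continuous_on {0..} \<rho>"
  by (simp add: dickman_def)

lemma dickman_eq_1: "dickman \<rho> \<Longrightarrow> 0 \<le> t \<Longrightarrow> t \<le> 1 \<Longrightarrow> \<rho> t = 1"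
  by (simp add: dickman_def)

lemma dickman_integrable_on:
  "dickman \<rho> \<Longrightarrow> 0 \<le> a \<Longrightarrow> \<rho> integrable_on {a..b}"
  by (rule integrable_continuous_interval, erule continuous_on_subset[OF dickman_continuous_on]) auto

lemma integral_has_real_derivative_at:
  fixes f :: "real \<Rightarrow> real"
  assumes "continuous_on {a..} f" "a < v"
  shows "((\<lambda>u. integral {a..u} f) has_real_derivative f v) (at v)"
proof -
  have "continuous_on {a..v+1} f"
    using assms(1) by (rule continuous_on_subset) auto
  then have "((\<lambda>u. integral {a..u} f) has_real_derivative f v) (at v within {a..v+1})"
    by (rule integral_has_real_derivative) (use assms(2) in auto)
  moreover have "at v within {a..v+1} = at v"
    using assms(2) by (intro at_within_interior) auto
  ultimately show ?thesis by simp
qed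

lemma dickman_integral_equation:
  assumes d: "dickman \<rho>" and u: "1 \<le> u"
  shows "u * \<rho> u = integral {u-1..u} \<rho>"
proof -
  define G where "G v = integral {0..v} \<rho>" for v
  define F where "F v = v * \<rho> v - G v + G (v - 1)" for v
  have F_deriv: "(F has_real_derivative 0) (at v)" if "1 < v" for v
  proof -
    obtain D where D: "(\<rho> has_real_derivative D) (at v)" "v * D = - \<rho> (v - 1)"
      using d \<open>1 < v\<close> unfolding dickman_def by blast
    have "(G has_real_derivative \<rho> v) (at v)" "(G has_real_derivative \<rho> (v - 1)) (at (v - 1))"
      unfolding G_def using \<open>1 < v\<close>
      by (auto intro!: integral_has_real_derivative_at dickman_continuous_on[OF d])
    then have "(F has_real_derivative \<rho> v + v * D - \<rho> v + \<rho> (v - 1)) (at v)"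
      unfolding F_def using D(1)
      by (auto intro!: derivative_eq_intros DERIV_chain2[where g = "\<lambda>v. v - 1"])
    then show ?thesis using D(2) by simp
  qed
  have G_cont: "continuous_on {0..u} G"
    unfolding G_def by (intro indefinite_integral_continuous_1 dickman_integrable_on d) simp
  have F_cont: "continuous_on {1..u} F"
    unfolding F_def
    by (intro continuous_intros continuous_on_subset[OF dickman_continuous_on[OF d]]
          continuous_on_subset[OF G_cont] continuous_on_compose2[OF G_cont]) auto
  have "G 1 = integral {0..1} (\<lambda>_::real. 1::real)"
    unfolding G_def using dickman_eq_1[OF d] by (intro Henstock_Kurzweil_Integration.integral_cong) auto
  then have F1: "F 1 = 0"
    unfolding F_def by (simp add: dickman_eq_1[OF d] G_def)
  have "F u = 0"
  proof (cases "u = 1")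
    case False
    then show ?thesis
      using DERIV_isconst_end[of 1 u F] u F_cont F_deriv F1 by simp
  qed (simp add: F1)
  moreover have "G u = G (u - 1) + integral {u-1..u} \<rho>"
    unfolding G_def using u
    by (intro Henstock_Kurzweil_Integration.integral_combine[symmetric] dickman_integrable_on d) auto
  ultimately show ?thesis unfolding F_def by simp
qed

lemma integral_exp_neg_mult:
  fixes x a b :: real
  assumes "0 < x" "a \<le> b"
  shows "integral {a..b} (\<lambda>t. exp (- (x * t))) = (exp (- (x * a)) - exp (- (x * b))) / x"
proof -
  have "((\<lambda>t. exp (- (x * t))) has_integral (- exp (- (x * b)) / x) - (- exp (- (x * a)) / x)) {a..b}"
  proof (rule fundamental_theorem_of_calculus[OF assms(2)])
    fix t
    have "((\<lambda>t. - exp (- (x * t)) / x) has_real_derivative exp (- (x * t))) (at t)"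
      using assms(1) by (auto intro!: derivative_eq_intros)
    then show "((\<lambda>t. - exp (- (x * t)) / x) has_vector_derivative exp (- (x * t))) (at t within {a..b})"
      by (simp add: has_real_derivative_iff_has_vector_derivative has_vector_derivative_at_within)
  qed
  then show ?thesis by (simp add: integral_unique diff_divide_distrib)
qed

lemma dickman_weighted_local_max:
  assumes d: "dickman \<rho>" and x: "0 < x" and t: "1 \<le> t"
    and max: "\<And>y. y \<in> {t-1..t} \<Longrightarrow> \<bar>\<rho> y\<bar> * exp (x * y) \<le> \<bar>\<rho> t\<bar> * exp (x * t)"
  shows "t * \<bar>\<rho> t\<bar> \<le> \<bar>\<rho> t\<bar> * ((exp x - 1) / x)"
proof -
  define M where "M = \<bar>\<rho> t\<bar> * exp (x * t)"
  have "t * \<bar>\<rho> t\<bar> = norm (integral {t-1..t} \<rho>)"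
    using t by (simp add: abs_mult flip: dickman_integral_equation[OF d t])
  also have "\<dots> \<le> integral {t-1..t} (\<lambda>y. M * exp (- (x * y)))"
  proof (rule integral_norm_bound_integral)
    show "\<rho> integrable_on {t-1..t}"
      using t by (intro dickman_integrable_on d) simp
    show "(\<lambda>y. M * exp (- (x * y))) integrable_on {t-1..t}"
      by (intro integrable_continuous_interval continuous_intros)
    fix y assume "y \<in> {t-1..t}"
    then have "\<bar>\<rho> y\<bar> * exp (x * y) * exp (- (x * y)) \<le> M * exp (- (x * y))"
      unfolding M_def by (intro mult_right_mono max) auto
    then show "norm (\<rho> y) \<le> M * exp (- (x * y))"
      by (simp add: mult.assoc flip: exp_add)
  qed
  also have "\<dots> = M * ((exp (- (x * (t - 1))) - exp (- (x * t))) / x)"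
    using integral_exp_neg_mult[OF x, of "t - 1" t] by simp
  also have "\<dots> = \<bar>\<rho> t\<bar> * ((exp x - 1) / x)"
    unfolding M_def by (simp add: algebra_simps diff_divide_distrib flip: exp_add)
  finally show ?thesis .
qed

lemma dickman_weighted_bound_extend:
  assumes d: "dickman \<rho>" and x: "0 < x"
    and S: "\<And>t. t \<in> {0..(exp x - 1) / x} \<Longrightarrow> \<bar>\<rho> t\<bar> * exp (x * t) \<le> S" and u: "0 \<le> u"
  shows "\<bar>\<rho> u\<bar> * exp (x * u) \<le> S"
proof -
  define H where "H t = \<bar>\<rho> t\<bar> * exp (x * t)" for t
  define u0 where "u0 = (exp x - 1) / x"
  have "1 + x \<le> exp x" by (rule exp_ge_add_one_self)
  then have u0: "1 \<le> u0" unfolding u0_def using x by (simp add: field_simps)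
  then have "\<bar>\<rho> 0\<bar> \<le> S"
    using S[of 0] unfolding u0_def by simp
  then have S0: "0 \<le> S"
    by (meson abs_ge_zero order_trans)
  have H_cont: "continuous_on {0..u} H"
    unfolding H_def by (intro continuous_intros continuous_on_subset[OF dickman_continuous_on[OF d]]) auto
  obtain t where t: "t \<in> {0..u}" and t_max: "\<forall>y\<in>{0..u}. H y \<le> H t"
    using continuous_attains_sup[OF compact_Icc _ H_cont] u by auto
  have "H t \<le> S"
  proof (cases "t \<le> u0")
    case True
    then show ?thesis using S t unfolding H_def u0_def by simp
  next
    case False
    with u0 t t_max have "t * \<bar>\<rho> t\<bar> \<le> \<bar>\<rho> t\<bar> * u0"
      unfolding u0_def H_def by (intro dickman_weighted_local_max d x) auto
    then have "(t - u0) * \<bar>\<rho> t\<bar> \<le> 0"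
      by (simp add: algebra_simps)
    with False have "\<rho> t = 0"
      by (simp add: mult_le_0_iff)
    then show ?thesis using S0 unfolding H_def by simp
  qed
  moreover have "H u \<le> H t"
    using t_max u by simp
  ultimately show ?thesis unfolding H_def by simp
qed

lemma dickman_weighted_bounded:
  assumes d: "dickman \<rho>" and x: "0 < x"
  shows "\<exists>B. \<forall>u\<ge>0. \<bar>\<rho> u\<bar> * exp (x * u) \<le> B"
proof -
  define H where "H t = \<bar>\<rho> t\<bar> * exp (x * t)" for t
  have H_cont: "continuous_on {0..(exp x - 1) / x} H"
    unfolding H_def by (intro continuous_intros continuous_on_subset[OF dickman_continuous_on[OF d]]) auto
  have "0 \<le> (exp x - 1) / x"
    using x by simp
  then obtain t where "\<forall>y\<in>{0..(exp x - 1) / x}. H y \<le> H t"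
    using continuous_attains_sup[OF compact_Icc _ H_cont] by auto
  then have "\<bar>\<rho> u\<bar> * exp (x * u) \<le> H t" if "0 \<le> u" for u
    using dickman_weighted_bound_extend[OF d x _ that] unfolding H_def by simp
  then show ?thesis by blast
qed

lemma dickman_weighted_bound_step:
  assumes d: "dickman \<rho>" and h: "0 < h" "h < x"
    and B: "\<And>u. 0 \<le> u \<Longrightarrow> \<bar>\<rho> u\<bar> * exp ((x - h) * u) \<le> B" and u: "0 \<le> u"
  shows "\<bar>\<rho> u\<bar> * exp (x * u) \<le> B * exp (h * ((exp x - 1) / x))"
proof (rule dickman_weighted_bound_extend[OF d _ _ u])
  show "0 < x" using h by simp
  have B0: "0 \<le> B" using B[of 0] by simp
  fix t assume t: "t \<in> {0..(exp x - 1) / x}"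
  have "\<bar>\<rho> t\<bar> * exp (x * t) = \<bar>\<rho> t\<bar> * exp ((x - h) * t) * exp (h * t)"
    by (simp add: algebra_simps flip: exp_add)
  also have "\<dots> \<le> B * exp (h * ((exp x - 1) / x))"
    using t h B0 B[of t] by (intro mult_mono exp_mono mult_left_mono) auto
  finally show "\<bar>\<rho> t\<bar> * exp (x * t) \<le> B * exp (h * ((exp x - 1) / x))" .
qed

lemma exp_div_self_increment:
  fixes s x :: real
  assumes s: "0 < s" "s \<le> 1/4" and x: "1/s + 1 + s/2 \<le> x"
  shows "(1 + 2 * s) * exp (x - s/2) / (x - s/2) + s/2 * ((exp x - 1) / x) \<le> (1 + 2 * s) * exp x / x"
proof -
  define c where "c = 1 + 2 * s"
  define h where "h = s/2"
  have "4 \<le> 1/s" using s by (simp add: field_simps)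
  then have h: "0 < h" "h < x" "x - h > 0" using x s unfolding h_def by auto
  have sx: "1 + s + s^2/2 \<le> s * x"
  proof -
    have "1 + s + s^2/2 = s * (1/s + 1 + s/2)"
      using s by (simp add: field_simps power2_eq_square)
    also have "\<dots> \<le> s * x"
      using x s by (intro mult_left_mono) auto
    finally show ?thesis .
  qed
  \<comment> \<open>after dividing by \<open>exp x\<close> and using \<open>exp h \<ge> 1 + h\<close>, the claim reduces to this\<close>
  have poly: "c * x \<le> (c - h) * ((1 + h) * (x - h))"
  proof -
    have "(c - h) * ((1 + h) * (x - h)) - c * x = 3/4 * s * (s * x) - s/2 * (1 + 2 * s + 3/4 * s^2)"
      unfolding c_def h_def power2_eq_square by (simp add: field_simps)
    moreover have "3/4 * s * (1 + s + s^2/2) \<le> 3/4 * s * (s * x)"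
      using sx s by (intro mult_left_mono) auto
    moreover have "3/4 * s * (1 + s + s^2/2) - s/2 * (1 + 2 * s + 3/4 * s^2) = s/4 * (1 - s)"
      by (simp add: algebra_simps power2_eq_square power3_eq_cube)
    moreover have "0 \<le> s/4 * (1 - s)" using s by auto
    ultimately show ?thesis by linarith
  qed
  have "exp (x - h) * (1 + h) \<le> exp (x - h) * exp h"
    by (intro mult_left_mono exp_ge_add_one_self) simp
  then have exp_shift: "exp (x - h) * (1 + h) \<le> exp x"
    by (simp flip: exp_add)
  have "c * exp (x - h) / (x - h) = c * (exp (x - h) * (1 + h)) / ((1 + h) * (x - h))"
    using h by simp
  also have "\<dots> \<le> c * exp x / ((1 + h) * (x - h))"
    using exp_shift h s unfolding c_def by (intro divide_right_mono mult_left_mono) auto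
  also have "\<dots> \<le> (c - h) * exp x / x"
  proof -
    have "c / ((1 + h) * (x - h)) \<le> (c - h) / x"
      using poly h by (simp add: divide_simps mult.commute)
    from mult_right_mono[OF this, of "exp x"] show ?thesis
      by (simp add: times_divide_eq_left)
  qed
  moreover have "h * ((exp x - 1) / x) \<le> h * exp x / x"
    using h by (simp add: divide_right_mono)
  ultimately have "c * exp (x - h) / (x - h) + h * ((exp x - 1) / x) \<le> (c - h) * exp x / x + h * exp x / x"
    by linarith
  also have "\<dots> = c * exp x / x"
    using h by (simp add: field_simps)
  finally show ?thesis unfolding c_def h_def .
qed

lemma real_step_induct:
  fixes P :: "real \<Rightarrow> bool"
  assumes h: "0 < h"
    and base: "\<And>x. a \<le> x \<Longrightarrow> x \<le> a + h \<Longrightarrow> P x"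
    and step: "\<And>x. a + h \<le> x \<Longrightarrow> P (x - h) \<Longrightarrow> P x"
    and x: "a \<le> x"
  shows "P x"
proof -
  have "\<forall>x. a \<le> x \<and> x \<le> a + h + real n * h \<longrightarrow> P x" for n
  proof (induction n)
    case 0
    then show ?case using base by simp
  next
    case (Suc n)
    show ?case
    proof (intro allI impI)
      fix x assume x: "a \<le> x \<and> x \<le> a + h + real (Suc n) * h"
      show "P x"
      proof (cases "x \<le> a + h")
        case True
        then show ?thesis using base x by simp
      next
        case False
        then have "P (x - h)" using Suc.IH x by (simp add: algebra_simps)
        then show ?thesis using step False by simp
      qed
    qed
  qed
  moreover obtain n where "(x - a) / h \<le> real n"
    using real_arch_simple by blast
  then have "x \<le> a + h + real n * h"
    using h by (simp add: divide_le_eq algebra_simps)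
  ultimately show ?thesis using x by blast
qed

lemma dickman_weighted_growth:
  assumes d: "dickman \<rho>" and \<epsilon>: "0 < \<epsilon>"
  shows "\<exists>K\<ge>0. \<exists>X>0. \<forall>x\<ge>X. \<forall>u\<ge>0. \<bar>\<rho> u\<bar> * exp (x * u) \<le> K * exp ((1 + \<epsilon>) * exp x / x)"
proof -
  define s where "s = min (1/4) (\<epsilon>/2)"
  define c where "c = 1 + 2 * s"
  define h where "h = s/2"
  define X where "X = 1/s + 1"
  have s: "0 < s" "s \<le> 1/4" and c: "0 < c" "c \<le> 1 + \<epsilon>" and h: "0 < h"
    using \<epsilon> unfolding s_def c_def h_def by auto
  have X: "0 < X" unfolding X_def using s by (auto intro!: add_pos_pos)
  obtain K where K: "\<And>u. 0 \<le> u \<Longrightarrow> \<bar>\<rho> u\<bar> * exp ((X + h) * u) \<le> K"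
    using dickman_weighted_bounded[OF d, of "X + h"] X h by auto
  have K0: "0 \<le> K" using K[of 0] by simp
  have bound: "\<forall>u\<ge>0. \<bar>\<rho> u\<bar> * exp (x * u) \<le> K * exp (c * exp x / x)" if "X \<le> x" for x
  proof (rule real_step_induct[OF h _ _ that])
    fix x assume x: "X \<le> x" "x \<le> X + h"
    have "0 \<le> c * exp x / x" using c X x by simp
    then have "K \<le> K * exp (c * exp x / x)"
      using K0 mult_left_mono[of 1 "exp (c * exp x / x)" K] by simp
    moreover have "\<bar>\<rho> u\<bar> * exp (x * u) \<le> \<bar>\<rho> u\<bar> * exp ((X + h) * u)" if "0 \<le> u" for u
      using x that by (intro mult_left_mono) (auto intro: mult_right_mono)
    ultimately show "\<forall>u\<ge>0. \<bar>\<rho> u\<bar> * exp (x * u) \<le> K * exp (c * exp x / x)"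
      using K by (meson order_trans)
  next
    fix x assume x: "X + h \<le> x"
      and IH: "\<forall>u\<ge>0. \<bar>\<rho> u\<bar> * exp ((x - h) * u) \<le> K * exp (c * exp (x - h) / (x - h))"
    have "c * exp (x - h) / (x - h) + h * ((exp x - 1) / x) \<le> c * exp x / x"
      using exp_div_self_increment[OF s] x unfolding c_def h_def X_def by simp
    then have "K * exp (c * exp (x - h) / (x - h)) * exp (h * ((exp x - 1) / x)) \<le> K * exp (c * exp x / x)"
      using K0 by (simp add: mult.assoc mult_left_mono flip: exp_add)
    moreover have "\<bar>\<rho> u\<bar> * exp (x * u) \<le> K * exp (c * exp (x - h) / (x - h)) * exp (h * ((exp x - 1) / x))"
      if "0 \<le> u" for u
      using dickman_weighted_bound_step[OF d h _ _ that] IH x X by auto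
    ultimately show "\<forall>u\<ge>0. \<bar>\<rho> u\<bar> * exp (x * u) \<le> K * exp (c * exp x / x)"
      by (meson order_trans)
  qed
  have "\<bar>\<rho> u\<bar> * exp (x * u) \<le> K * exp ((1 + \<epsilon>) * exp x / x)" if "X \<le> x" "0 \<le> u" for x u
  proof -
    have "c * exp x / x \<le> (1 + \<epsilon>) * exp x / x"
      using c X that by (intro divide_right_mono mult_right_mono) auto
    then show ?thesis using bound[OF that(1)] that(2) K0 by (meson exp_le_cancel_iff mult_left_mono order_trans)
  qed
  then show ?thesis using K0 X by blast
qed

lemma power_series_bound_exp_weighted:
  fixes a :: "nat \<Rightarrow> real"
  assumes h: "0 < h" and A: "0 \<le> A" "A \<le> exp (x - h)"
    and a: "\<And>n. \<bar>a n\<bar> * exp (x * real n) \<le> M"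
  shows "summable (\<lambda>n. A ^ (n + 1) * a (n + 1)) \<and> \<bar>\<Sum>n. A ^ (n + 1) * a (n + 1)\<bar> \<le> M / (1 - exp (- h))"
proof -
  define r where "r = A * exp (- x)"
  have r: "0 \<le> r" "r \<le> exp (- h)" "exp (- h) < 1"
    using A h unfolding r_def by (auto simp: exp_diff exp_minus field_simps)
  then have r1: "r < 1" by linarith
  have M: "0 \<le> M" using a[of 0] by simp
  have bound: "\<bar>A ^ (n + 1) * a (n + 1)\<bar> \<le> M * r * r ^ n" for n
  proof -
    have "A ^ (n + 1) = r ^ (n + 1) * exp (x * real (n + 1))"
      unfolding r_def by (simp add: power_mult_distrib field_simps flip: exp_of_nat_mult exp_add)
    then have "\<bar>A ^ (n + 1) * a (n + 1)\<bar> = r ^ (n + 1) * (\<bar>a (n + 1)\<bar> * exp (x * real (n + 1)))"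
      using r by (simp add: abs_mult)
    also have "\<dots> \<le> r ^ (n + 1) * M"
      using a[of "n + 1"] r by (intro mult_left_mono) auto
    finally show ?thesis by (simp add: algebra_simps)
  qed
  have geom: "summable (\<lambda>n. M * r * r ^ n)"
    using r r1 by (intro summable_mult summable_geometric) simp
  have abs_summable: "summable (\<lambda>n. \<bar>A ^ (n + 1) * a (n + 1)\<bar>)"
    using bound by (intro summable_comparison_test'[OF geom, of 0]) simp
  have "\<bar>\<Sum>n. A ^ (n + 1) * a (n + 1)\<bar> \<le> (\<Sum>n. M * r * r ^ n)"
    using summable_rabs[OF abs_summable] suminf_le[OF bound abs_summable geom] by linarith
  also have "\<dots> = M * (r / (1 - r))"
    using r r1 by (simp add: suminf_mult suminf_geometric)
  also have "\<dots> \<le> M / (1 - exp (- h))"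
  proof -
    have "r / (1 - r) \<le> 1 / (1 - r)"
      using r r1 by (intro divide_right_mono) auto
    also have "\<dots> \<le> 1 / (1 - exp (- h))"
      using r r1 by (intro frac_le) auto
    finally show ?thesis
      using M mult_left_mono by fastforce
  qed
  finally show ?thesis
    using summable_rabs_cancel[OF abs_summable] by blast
qed

lemma exp_div_self_max_ln_le:
  fixes A h X c :: real
  assumes A: "1 < A" and h: "0 < h" and X: "0 < X" and c: "0 \<le> c"
  shows "c * exp (max (ln A + h) X) / max (ln A + h) X \<le> c * exp X / X + c * exp h * A / ln A"
proof -
  have lnA: "0 < ln A" using A by simp
  have "c * exp (ln A + h) / (ln A + h) = c * exp h * A / (ln A + h)"
    using A by (simp add: exp_add)
  also have "\<dots> \<le> c * exp h * A / ln A"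
    using A lnA h c by (intro divide_left_mono mult_pos_pos add_pos_pos) auto
  finally have shifted: "c * exp (ln A + h) / (ln A + h) \<le> c * exp h * A / ln A" .
  have "0 \<le> c * exp X / X" "0 \<le> c * exp h * A / ln A"
    using A lnA X c by simp_all
  then show ?thesis
    using shifted by (cases "ln A + h \<le> X") (simp_all add: max_def)
qed

theorem lemma2p1:
  fixes \<eta> :: real and \<rho> :: "real \<Rightarrow> real"
  assumes "\<eta> > 0" and "dickman \<rho>"
  shows "\<exists>C. \<forall>A::real. A \<ge> 2 \<longrightarrow>
           summable (\<lambda>n. A ^ (n + 1) * \<rho> (real (n + 1))) \<and>
           \<bar>\<Sum>n. A ^ (n + 1) * \<rho> (real (n + 1))\<bar> \<le> C * exp ((1 + \<eta>) * A / ln A)"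
proof -
  define \<epsilon> where "\<epsilon> = \<eta> / 2"
  define \<phi> where "\<phi> x = (1 + \<epsilon>) * exp x / x" for x
  define h where "h = ln ((1 + \<eta>) / (1 + \<epsilon>))"
  have h: "0 < h" "(1 + \<epsilon>) * exp h = 1 + \<eta>"
    using assms(1) unfolding h_def \<epsilon>_def by auto
  obtain K X where K: "0 \<le> K" and X: "0 < X"
    and growth: "\<And>x u. X \<le> x \<Longrightarrow> 0 \<le> u \<Longrightarrow> \<bar>\<rho> u\<bar> * exp (x * u) \<le> K * exp (\<phi> x)"
    using dickman_weighted_growth[OF assms(2), of \<epsilon>] assms(1) unfolding \<epsilon>_def \<phi>_def by auto
  show ?thesis
  proof (intro exI[of _ "K * exp (\<phi> X) / (1 - exp (- h))"] allI impI)
    fix A :: real assume A: "2 \<le> A"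
    define x where "x = max (ln A + h) X"
    have "\<phi> x \<le> \<phi> X + (1 + \<eta>) * A / ln A"
      using exp_div_self_max_ln_le[of A h X "1 + \<epsilon>"] A h X assms(1)
      unfolding x_def \<phi>_def \<epsilon>_def by simp
    then have "K * exp (\<phi> x) / (1 - exp (- h)) \<le> K * (exp (\<phi> X) * exp ((1 + \<eta>) * A / ln A)) / (1 - exp (- h))"
      using K h by (intro divide_right_mono mult_left_mono) (auto simp flip: exp_add)
    moreover have "summable (\<lambda>n. A ^ (n + 1) * \<rho> (real (n + 1))) \<and>
        \<bar>\<Sum>n. A ^ (n + 1) * \<rho> (real (n + 1))\<bar> \<le> K * exp (\<phi> x) / (1 - exp (- h))"
    proof (rule power_series_bound_exp_weighted[OF h(1)])
      have "ln A \<le> x - h"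
        unfolding x_def by simp
      then show "A \<le> exp (x - h)"
        using A exp_le_cancel_iff[of "ln A" "x - h"] by simp
      show "\<bar>\<rho> (real n)\<bar> * exp (x * real n) \<le> K * exp (\<phi> x)" for n
        by (rule growth) (simp_all add: x_def)
    qed (use A in simp)
    ultimately show "summable (\<lambda>n. A ^ (n + 1) * \<rho> (real (n + 1))) \<and>
        \<bar>\<Sum>n. A ^ (n + 1) * \<rho> (real (n + 1))\<bar> \<le> K * exp (\<phi> X) / (1 - exp (- h)) * exp ((1 + \<eta>) * A / ln A)"
      by simp
  qed
qed

end
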